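(* Let $\lambda>0$ and $1\le\nu<2$. The solution $u_\nu$ of $\frac{\partial^{\nu}u}{\partial t^{\nu}}=\lambda^2\frac{\partial^2u}{\partial x^2}$, $x\in\mathbb{R}$, $t>0$, with $u(x,0)=\delta(x)$, $u_t(x,0)=0$, satisfies \[ u_\nu(x,t)=\frac2\nu\,\frac{1}{2\lambda t^{\nu/2}}\,p_{2/\nu}\!\left(\frac{|x|}{\lambda t^{\nu/2}};\frac2\nu(\nu-1),1\right)=\frac1\nu\,p_{2/\nu}\!\left(|x|;\frac2\nu(\nu-1),\lambda^{2/\nu}t\right). \]
   Context: Fractional derivative in the Dzherbashyan–Caputo sense: for $1<\nu<2$, $\frac{\partial^{\nu}u}{\partial t^{\nu}}(x,t)=\frac{1}{\Gamma(2-\nu)}\int_0^t (t-s)^{1-\nu}\frac{\partial^2 u}{\partial s^2}(x,s)\,ds$; for $\nu=1$ the ordinary first derivative (the condition $u_t(x,0)=0$ being then the one stated). The solution is $u_\nu(x,t)=\frac{1}{2\lambda t^{\nu/2}}\sum_{k\ge0}\frac{(-|x|/(\lambda t^{\nu/2}))^k}{k!\,\Gamma(-\nu k/2+1-\nu/2)}$. For $\alpha\neq1$, the stable density is $p_\alpha(x;\gamma,\eta)=\frac{1}{2\pi}\int_{-\infty}^{+\infty}e^{-i\beta x}\exp\{-\eta|\beta|^\alpha e^{-i\frac{\pi\gamma}{2}\frac{\beta}{|\beta|}}\}\,d\beta$. *)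

theory Defs
  imports "HOL-Analysis.Analysis"
begin

text \<open>The explicit solution of the time-fractional equation, given as the series in the paper.
  Reciprocal Gamma (rGamma) is used for 1/Gamma, which vanishes at the poles of Gamma.\<close>
definition u_sol :: "real \<Rightarrow> real \<Rightarrow> real \<Rightarrow> real \<Rightarrow> real" where
  "u_sol lam \<nu> x t =
     1 / (2 * lam * t powr (\<nu>/2)) *
     (\<Sum>k. (- (\<bar>x\<bar> / (lam * t powr (\<nu>/2)))) ^ k / fact k
            * rGamma (- \<nu> * real k / 2 + 1 - \<nu>/2))"

definition stable_density :: "real \<Rightarrow> real \<Rightarrow> real \<Rightarrow> real \<Rightarrow> complex" where
  "stable_density \<alpha> x \<gamma> \<eta> =
     1 / (2 * of_real pi) *
     integral UNIV (\<lambda>\<beta>::real.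
        exp (- \<i> * of_real (\<beta> * x)) *
        exp (- of_real (\<eta> * \<bar>\<beta>\<bar> powr \<alpha>)
             * exp (- \<i> * of_real (pi * \<gamma> / 2 * sgn \<beta>))))"

end

theory Submission
  imports Defs
begin

text \<open>
  For \<open>1 < \<alpha> \<le> 2\<close> the Fourier integral defining \<open>p\<^sub>\<alpha>(x; 2 - \<alpha>, \<eta>)\<close> splits into the
  half-line integrals \<open>\<integral>\<^sub>0\<^sup>\<infinity> exp(\<mp>i\<beta>x) exp(-c \<beta>^\<alpha>) d\<beta>\<close> with \<open>c = \<eta> exp(\<mp>i\<theta>)\<close>,
  \<open>\<theta> = \<pi>(2 - \<alpha>)/2\<close>, so that \<open>Re c > 0\<close>. Expanding \<open>exp(\<mp>i\<beta>x)\<close> and integrating termwise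
  (dominated convergence, using \<open>\<alpha> > 1\<close>) reduces them to the moments
  \<open>\<integral>\<^sub>0\<^sup>\<infinity> \<beta>^n exp(-c \<beta>^\<alpha>) d\<beta> = \<Gamma>((n+1)/\<alpha>) c^(-(n+1)/\<alpha>) / \<alpha>\<close>, which for complex \<open>c\<close>
  follow from the real case by a binomial series. The two halves are complex conjugates, their
  sum is a cosine, and the reflection formula turns \<open>\<Gamma>(s) sin(\<pi>s)/\<pi>\<close> into \<open>1/\<Gamma>(1 - s)\<close>.
  Hence \<open>p\<^sub>\<alpha>(x; 2 - \<alpha>, \<eta>) = \<eta>^(-1/\<alpha>) M\<^bsub>1/\<alpha>\<^esub>(x \<eta>^(-1/\<alpha>)) / \<alpha>\<close> with Mainardi's function
  \<open>M\<close>, whereas \<open>u\<^sub>\<nu>(x, t) = M\<^bsub>\<nu>/2\<^esub>(|x|/L) / (2L)\<close> for \<open>L = \<lambda> t^(\<nu>/2)\<close>; take \<open>\<alpha> = 2/\<nu>\<close>.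
\<close>

lemma has_integral_powr_exp_neg_powr:
  fixes \<alpha> a p :: real
  assumes "\<alpha> > 0" "a > 0" "p > -1"
  shows "((\<lambda>\<beta>. \<beta> powr p * exp (- (a * \<beta> powr \<alpha>))) has_integral
           Gamma ((p + 1) / \<alpha>) / (\<alpha> * a powr ((p + 1) / \<alpha>))) {0<..}"
proof -
  define s where "s = (p + 1) / \<alpha>"
  have s: "s > 0" using assms by (simp add: s_def)
  define f where "f = (\<lambda>u::real. u powr (s - 1) / exp u)"
  have "(f has_integral Gamma s) (interior {0..})"
    unfolding f_def using Gamma_integral_real[OF s] by (subst has_integral_interior) auto
  then have f_int: "(f has_integral Gamma s) {0<..}" by simp
  then have f_abs: "f absolutely_integrable_on {0<..}"
    by (intro nonnegative_absolutely_integrable_1) (auto simp: f_def has_integral_integrable)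
  define g where "g = (\<lambda>\<beta>::real. a * \<beta> powr \<alpha>)"
  define g' where "g' = (\<lambda>\<beta>::real. a * (\<alpha> * \<beta> powr (\<alpha> - 1)))"
  have g_deriv: "(g has_field_derivative g' \<beta>) (at \<beta> within {0<..})" if "\<beta> \<in> {0<..}" for \<beta>
    unfolding g_def g'_def using that by (auto intro!: derivative_eq_intros)
  have g_inj: "inj_on g {0<..}"
  proof (rule inj_onI)
    fix u v :: real assume "u \<in> {0<..}" "v \<in> {0<..}" "g u = g v"
    then have "(u powr \<alpha>) powr (1 / \<alpha>) = (v powr \<alpha>) powr (1 / \<alpha>)"
      using assms by (simp add: g_def)
    with \<open>u \<in> {0<..}\<close> \<open>v \<in> {0<..}\<close> show "u = v" using assms by (simp add: powr_powr)
  qed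
  have g_image: "g ` {0<..} = {0<..}"
  proof (intro equalityI subsetI)
    fix u :: real assume "u \<in> {0<..}"
    then have "u = g ((u / a) powr (1 / \<alpha>))" "(u / a) powr (1 / \<alpha>) \<in> {0<..}"
      using assms by (simp_all add: g_def powr_powr)
    then show "u \<in> g ` {0<..}" by blast
  qed (use assms in \<open>auto simp: g_def\<close>)
  have "(\<lambda>\<beta>. \<bar>g' \<beta>\<bar> * f (g \<beta>)) absolutely_integrable_on {0<..} \<and>
        integral {0<..} (\<lambda>\<beta>. \<bar>g' \<beta>\<bar> * f (g \<beta>)) = Gamma s"
    using has_absolute_integral_change_of_variables_1'[OF _ g_deriv g_inj] f_abs f_int g_image
    by (simp add: integral_unique)
  then have transformed: "((\<lambda>\<beta>. \<bar>g' \<beta>\<bar> * f (g \<beta>)) has_integral Gamma s) {0<..}"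
    by (metis has_integral_integral set_lebesgue_integral_eq_integral(1))
  have integrand: "\<bar>g' \<beta>\<bar> * f (g \<beta>) = (\<alpha> * a powr s) * (\<beta> powr p * exp (- (a * \<beta> powr \<alpha>)))"
    if "\<beta> \<in> {0<..}" for \<beta>
  proof -
    have "\<alpha> - 1 + \<alpha> * (s - 1) = p" using assms by (simp add: s_def field_simps)
    then have "\<beta> powr (\<alpha> - 1) * (a * \<beta> powr \<alpha>) powr (s - 1) = a powr (s - 1) * \<beta> powr p"
      using that assms by (simp add: powr_mult powr_powr flip: powr_add)
    moreover have "a * a powr (s - 1) = a powr s" using assms by (simp add: powr_diff)
    ultimately show ?thesis
      using that assms by (simp add: f_def g_def g'_def exp_minus field_simps)
  qed
  from has_integral_mult_right[OF has_integral_eq[OF integrand transformed], of "1 / (\<alpha> * a powr s)"]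
  show ?thesis using assms by (simp add: s_def)
qed

lemma has_integral_suminf_dominated:
  fixes F :: "nat \<Rightarrow> 'n::euclidean_space \<Rightarrow> 'm::euclidean_space"
  assumes F: "\<And>n. (F n has_integral T n) S" and h: "h integrable_on S"
    and bound: "\<And>N x. x \<in> S \<Longrightarrow> (\<Sum>n<N. norm (F n x)) \<le> h x"
    and sums: "\<And>x. x \<in> S \<Longrightarrow> (\<lambda>n. F n x) sums g x"
  shows "summable T" and "(g has_integral (\<Sum>n. T n)) S"
proof -
  define P where "P = (\<lambda>N x. \<Sum>n<N. F n x)"
  have P: "(P N has_integral (\<Sum>n<N. T n)) S" for N
    unfolding P_def by (intro has_integral_sum) (auto simp: F)
  have P_bound: "norm (P N x) \<le> h x" if "x \<in> S" for N x
    unfolding P_def using norm_sum bound[OF that] by (rule order_trans)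
  have P_lim: "(\<lambda>N. P N x) \<longlonglongrightarrow> g x" if "x \<in> S" for x
    using sums[OF that] by (simp add: P_def sums_def)
  have "g integrable_on S" "(\<lambda>N. integral S (P N)) \<longlonglongrightarrow> integral S g"
    using dominated_convergence[of P S h g] P h P_bound P_lim
    by (auto simp: has_integral_integrable)
  moreover have "integral S (P N) = (\<Sum>n<N. T n)" for N
    using P by (rule integral_unique)
  ultimately have "T sums integral S g" "(g has_integral integral S g) S"
    by (simp_all add: sums_def has_integral_integral)
  then show "summable T" "(g has_integral (\<Sum>n. T n)) S"
    by (simp_all add: sums_iff)
qed

lemma sum_power_div_fact_le_exp:
  fixes x :: real
  assumes "x \<ge> 0"
  shows "(\<Sum>n<N. x ^ n / fact n) \<le> exp x"
proof -
  have "(\<lambda>n. x ^ n / fact n) sums exp x"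
    using exp_converges[of x] by (simp add: divide_inverse_commute)
  then show ?thesis
    using assms sum_le_suminf[of "\<lambda>n. x ^ n / fact n" "{..<N}"] by (simp add: sums_iff)
qed

lemma has_integral_powr_exp_neg_complex:
  fixes \<alpha> p :: real and c :: complex
  assumes "\<alpha> > 0" "p > -1" "Re c > 0"
  shows "((\<lambda>\<beta>. of_real (\<beta> powr p) * exp (- (c * of_real (\<beta> powr \<alpha>)))) has_integral
          of_real (Gamma ((p + 1) / \<alpha>) / \<alpha>) * c powr (- of_real ((p + 1) / \<alpha>))) {0<..}"
proof -
  define s where "s = (p + 1) / \<alpha>"
  have s: "s > 0" using assms by (simp add: s_def)
  txt \<open>The real shift \<open>a\<close> satisfies \<open>|c - a| < a\<close>: expanding \<open>exp(-(c - a)\<beta>^\<alpha>)\<close> leaves the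
    integrable weight \<open>exp(-(a - |c - a|)\<beta>^\<alpha>)\<close>, and the binomial series of \<open>(c/a)^(-s)\<close> converges.\<close>
  define a where "a = (cmod c)\<^sup>2 / Re c"
  define d where "d = c - of_real a"
  have "c \<noteq> 0" using assms by auto
  then have a: "a > 0" using assms by (simp add: a_def)
  have "a * Re c = (cmod c)\<^sup>2" using assms by (simp add: a_def)
  then have "(cmod d)\<^sup>2 = a\<^sup>2 - (cmod c)\<^sup>2"
    unfolding d_def cmod_power2 by (simp add: power2_diff algebra_simps)
  then have "(cmod d)\<^sup>2 < a\<^sup>2" using \<open>c \<noteq> 0\<close> by simp
  then have d_lt_a: "cmod d < a" by (rule power_less_imp_less_base) (use a in simp)
  define F where "F = (\<lambda>m \<beta>. of_real (\<beta> powr (p + \<alpha> * real m) * exp (- (a * \<beta> powr \<alpha>)))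
                                  * ((- d) ^ m /\<^sub>R fact m))"
  define T where "T = (\<lambda>m. of_real (Gamma (s + real m) / (\<alpha> * a powr (s + real m)))
                             * ((- d) ^ m /\<^sub>R fact m))"
  define g where "g = (\<lambda>\<beta>. of_real (\<beta> powr p) * exp (- (c * of_real (\<beta> powr \<alpha>))))"
  have powr_split: "\<beta> powr (p + \<alpha> * real m) = \<beta> powr p * (\<beta> powr \<alpha>) ^ m" if "\<beta> > 0" for \<beta> m
    using that by (simp add: powr_add powr_powr flip: powr_realpow)
  have "(F m has_integral T m) {0<..}" for m
  proof -
    have "(p + \<alpha> * real m + 1) / \<alpha> = s + real m" using assms by (simp add: s_def field_simps)
    moreover have "p + \<alpha> * real m > -1" using assms mult_nonneg_nonneg[of \<alpha> "real m"] by linarith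
    ultimately show ?thesis
      unfolding F_def T_def using has_integral_powr_exp_neg_powr[of \<alpha> a "p + \<alpha> * real m"] assms a
      by (intro has_integral_mult_left has_integral_of_real) simp
  qed
  moreover have "(\<lambda>\<beta>. \<beta> powr p * exp (- ((a - cmod d) * \<beta> powr \<alpha>))) integrable_on {0<..}"
    using has_integral_powr_exp_neg_powr[of \<alpha> "a - cmod d" p] assms d_lt_a
    by (auto simp: has_integral_integrable)
  moreover have "(\<Sum>m<N. norm (F m \<beta>)) \<le> \<beta> powr p * exp (- ((a - cmod d) * \<beta> powr \<alpha>))"
    if "\<beta> \<in> {0<..}" for N \<beta>
  proof -
    have "(\<Sum>m<N. norm (F m \<beta>))
        = \<beta> powr p * exp (- (a * \<beta> powr \<alpha>)) * (\<Sum>m<N. (cmod d * \<beta> powr \<alpha>) ^ m / fact m)"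
      using that by (simp add: F_def powr_split norm_mult norm_power sum_distrib_left field_simps)
    also have "\<dots> \<le> \<beta> powr p * exp (- (a * \<beta> powr \<alpha>)) * exp (cmod d * \<beta> powr \<alpha>)"
      by (intro mult_left_mono sum_power_div_fact_le_exp) auto
    also have "\<dots> = \<beta> powr p * exp (- ((a - cmod d) * \<beta> powr \<alpha>))"
      by (simp add: algebra_simps flip: exp_add)
    finally show ?thesis .
  qed
  moreover have "(\<lambda>m. F m \<beta>) sums g \<beta>" if "\<beta> \<in> {0<..}" for \<beta>
  proof -
    define B where "B = \<beta> powr \<alpha>"
    have "(\<lambda>m. of_real (\<beta> powr p * exp (- (a * B))) * ((- d * of_real B) ^ m /\<^sub>R fact m)) sums
            (of_real (\<beta> powr p * exp (- (a * B))) * exp (- d * of_real B))"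
      by (intro sums_mult exp_converges)
    moreover have "of_real (\<beta> powr p * exp (- (a * B))) * exp (- d * of_real B) = g \<beta>"
      by (simp add: g_def B_def d_def algebra_simps flip: exp_add exp_of_real)
    ultimately show ?thesis
      using that
      by (simp add: F_def B_def powr_split power_minus[of d] power_minus[of "d * _"]
                    power_mult_distrib scaleR_conv_of_real mult_ac)
  qed
  ultimately have "(g has_integral (\<Sum>m. T m)) {0<..}"
    by (intro has_integral_suminf_dominated(2)) blast+
  moreover have "T sums (of_real (Gamma s / \<alpha>) * c powr (- of_real s))"
  proof -
    define K where "K = complex_of_real (Gamma s / (\<alpha> * a powr s))"
    have "cmod (d / of_real a) < 1" using d_lt_a a by (simp add: norm_divide)
    then have "(\<lambda>m. K * ((- of_real s gchoose m) * (d / of_real a) ^ m)) sums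
                 (K * (1 + d / of_real a) powr (- of_real s))"
      by (intro sums_mult gen_binomial_complex)
    moreover have "K * ((- of_real s gchoose m) * (d / of_real a) ^ m) = T m" for m
    proof -
      have "pochhammer s m = Gamma (s + real m) / Gamma s"
        using s by (intro pochhammer_Gamma) (auto elim!: nonpos_Ints_cases)
      then have "(- of_real s gchoose m :: complex)
                   = (- 1) ^ m * of_real (Gamma (s + real m) / Gamma s) / fact m"
        by (simp add: gbinomial_pochhammer pochhammer_of_real)
      moreover have "Gamma s \<noteq> 0" using Gamma_real_pos[OF s] by simp
      ultimately show ?thesis
        using a assms by (simp add: K_def T_def powr_add powr_realpow
                                     scaleR_conv_of_real power_minus[of d] field_simps)
    qed
    moreover have "K * (1 + d / of_real a) powr (- of_real s) = of_real (Gamma s / \<alpha>) * c powr (- of_real s)"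
    proof -
      have "(1 + d / of_real a) powr (- of_real s) = (of_real (1 / a) * c) powr of_real (- s)"
        using a by (simp add: d_def field_simps)
      also have "\<dots> = of_real (1 / a) powr of_real (- s) * c powr of_real (- s)"
        by (rule powr_times_real_left) (use a in auto)
      also have "of_real (1 / a) powr of_real (- s) = (of_real ((1 / a) powr (- s)) :: complex)"
        by (rule powr_of_real) (use a in simp)
      also have "(1 / a) powr (- s) = a powr s"
        using a by (simp add: powr_minus powr_divide)
      finally have "(1 + d / of_real a) powr (- of_real s) = of_real (a powr s) * c powr (- of_real s)"
        by simp
      then show ?thesis using a by (simp add: K_def)
    qed
    ultimately show ?thesis by simp
  qed
  ultimately show ?thesis unfolding g_def s_def by (simp add: sums_iff)
qed

lemma linear_le_const_plus_powr:
  fixes \<alpha> b k :: real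
  assumes "\<alpha> > 1" "b > 0" "k \<ge> 0"
  obtains K where "\<And>\<beta>. \<beta> \<ge> 0 \<Longrightarrow> k * \<beta> \<le> K + b * \<beta> powr \<alpha>"
proof
  define \<beta>\<^sub>0 where "\<beta>\<^sub>0 = (k / b) powr (1 / (\<alpha> - 1))"
  fix \<beta> :: real assume "\<beta> \<ge> 0"
  show "k * \<beta> \<le> k * \<beta>\<^sub>0 + b * \<beta> powr \<alpha>"
  proof (cases "\<beta> \<le> \<beta>\<^sub>0")
    case True
    then show ?thesis using assms by (simp add: mult_left_mono add_increasing2)
  next
    case False
    moreover have "\<beta>\<^sub>0 \<ge> 0" by (simp add: \<beta>\<^sub>0_def)
    ultimately have "\<beta> > 0" by linarith
    have "k / b = \<beta>\<^sub>0 powr (\<alpha> - 1)" using assms by (simp add: \<beta>\<^sub>0_def powr_powr)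
    also have "\<dots> \<le> \<beta> powr (\<alpha> - 1)" using False assms by (intro powr_mono2) (auto simp: \<beta>\<^sub>0_def)
    finally have "k * \<beta> \<le> b * (\<beta> powr (\<alpha> - 1) * \<beta>)"
      using assms \<open>\<beta> > 0\<close> by (simp add: field_simps mult_right_mono)
    also have "\<beta> powr (\<alpha> - 1) * \<beta> = \<beta> powr \<alpha>" using \<open>\<beta> > 0\<close> by (simp add: powr_diff)
    finally show ?thesis using assms by (simp add: \<beta>\<^sub>0_def add_increasing)
  qed
qed

lemma has_integral_Fourier_exp_neg_powr:
  fixes \<alpha> z :: real and c :: complex
  assumes "\<alpha> > 1" "Re c > 0"
  obtains I where
    "(\<lambda>n. ((- \<i> * of_real z) ^ n /\<^sub>R fact n) *
           (of_real (Gamma ((real n + 1) / \<alpha>) / \<alpha>) * c powr (- of_real ((real n + 1) / \<alpha>))))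
       sums I"
    "((\<lambda>\<beta>. exp (- \<i> * of_real (\<beta> * z)) * exp (- (c * of_real (\<beta> powr \<alpha>)))) has_integral I) {0<..}"
proof -
  define G where "G = (\<lambda>n \<beta>. ((- \<i> * of_real z) ^ n /\<^sub>R fact n) *
                            (of_real (\<beta> powr real n) * exp (- (c * of_real (\<beta> powr \<alpha>)))))"
  define T where "T = (\<lambda>n. ((- \<i> * of_real z) ^ n /\<^sub>R fact n) *
           (of_real (Gamma ((real n + 1) / \<alpha>) / \<alpha>) * c powr (- of_real ((real n + 1) / \<alpha>))))"
  txt \<open>Since \<open>\<alpha> > 1\<close>, half of the decay rate \<open>Re c\<close> absorbs the growth \<open>exp(|z|\<beta>)\<close>
    of the partial sums.\<close>
  define b where "b = Re c / 2"
  have b: "b > 0" using assms by (simp add: b_def)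
  obtain K where K: "\<And>\<beta>. \<beta> \<ge> 0 \<Longrightarrow> \<bar>z\<bar> * \<beta> \<le> K + b * \<beta> powr \<alpha>"
    using linear_le_const_plus_powr[OF assms(1) b, of "\<bar>z\<bar>"] by auto
  have "(G n has_integral T n) {0<..}" for n
    unfolding G_def T_def
    by (intro has_integral_mult_right has_integral_powr_exp_neg_complex) (use assms in auto)
  moreover have "(\<lambda>\<beta>. exp (- (b * \<beta> powr \<alpha>)) * exp K) integrable_on {0<..}"
  proof -
    have "(\<lambda>\<beta>. \<beta> powr 0 * exp (- (b * \<beta> powr \<alpha>))) integrable_on {0<..}"
      using has_integral_powr_exp_neg_powr[of \<alpha> b 0] assms b has_integral_integrable by auto
    then have "(\<lambda>\<beta>. exp (- (b * \<beta> powr \<alpha>))) integrable_on {0<..}"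
      by (rule integrable_eq) simp
    then show ?thesis by (rule integrable_on_mult_left)
  qed
  moreover have "(\<Sum>n<N. norm (G n \<beta>)) \<le> exp (- (b * \<beta> powr \<alpha>)) * exp K"
    if "\<beta> \<in> {0<..}" for N \<beta>
  proof -
    have "norm (G n \<beta>) = (\<bar>z\<bar> * \<beta>) ^ n / fact n * exp (- (Re c * \<beta> powr \<alpha>))" for n
      using that by (simp add: G_def norm_mult norm_power powr_realpow
                               power_mult_distrib divide_inverse mult_ac)
    then have "(\<Sum>n<N. norm (G n \<beta>)) = (\<Sum>n<N. (\<bar>z\<bar> * \<beta>) ^ n / fact n) * exp (- (Re c * \<beta> powr \<alpha>))"
      by (simp add: sum_distrib_right)
    also have "\<dots> \<le> exp (K + b * \<beta> powr \<alpha>) * exp (- (Re c * \<beta> powr \<alpha>))"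
      using that K[of \<beta>] sum_power_div_fact_le_exp[of "\<bar>z\<bar> * \<beta>" N]
      by (intro mult_right_mono) (auto intro: order_trans)
    also have "\<dots> = exp (- (b * \<beta> powr \<alpha>)) * exp K"
      using that by (simp add: b_def field_simps flip: exp_add)
    finally show ?thesis .
  qed
  moreover have "(\<lambda>n. G n \<beta>) sums (exp (- \<i> * of_real (\<beta> * z)) * exp (- (c * of_real (\<beta> powr \<alpha>))))"
    if "\<beta> \<in> {0<..}" for \<beta>
  proof -
    have "(\<lambda>n. ((- \<i> * of_real (\<beta> * z)) ^ n /\<^sub>R fact n) * exp (- (c * of_real (\<beta> powr \<alpha>)))) sums
            (exp (- \<i> * of_real (\<beta> * z)) * exp (- (c * of_real (\<beta> powr \<alpha>))))"
      by (intro sums_mult2 exp_converges)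
    then show ?thesis
      using that
      by (simp add: G_def powr_realpow power_minus[of "\<i> * _"] power_mult_distrib scaleR_conv_of_real mult_ac)
  qed
  ultimately have "summable T \<and> ((\<lambda>\<beta>. exp (- \<i> * of_real (\<beta> * z)) * exp (- (c * of_real (\<beta> powr \<alpha>))))
                                   has_integral (\<Sum>n. T n)) {0<..}"
    by (intro conjI has_integral_suminf_dominated) blast+
  then show ?thesis using that summable_sums unfolding T_def by blast
qed

lemma has_integral_reflect_UNIV:
  fixes f :: "real \<Rightarrow> 'a::banach"
  assumes "(f has_integral I) UNIV"
  shows "((\<lambda>x. f (- x)) has_integral I) UNIV"
  unfolding has_integral'[where S = UNIV] if_P[OF UNIV_I]
proof (intro allI impI)
  fix e :: real assume "e > 0"
  then obtain B where "B > 0" and B: "\<And>a b. ball 0 B \<subseteq> cbox a b \<Longrightarrow>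
      \<exists>z. (f has_integral z) (cbox a b) \<and> norm (z - I) < e"
    using assms unfolding has_integral'[where S = UNIV] by auto
  have "\<exists>z. ((\<lambda>x. f (- x)) has_integral z) (cbox a b) \<and> norm (z - I) < e"
    if "ball 0 B \<subseteq> cbox a b" for a b :: real
  proof -
    have "ball 0 B \<subseteq> cbox (- b) (- a)"
    proof
      fix x :: real assume "x \<in> ball 0 B"
      then have "- x \<in> ball 0 B" by simp
      then have "- x \<in> cbox a b" using that by blast
      then show "x \<in> cbox (- b) (- a)" by auto
    qed
    then obtain z where "(f has_integral z) {- b..- a}" "norm (z - I) < e"
      using B by force
    then show ?thesis using has_integral_reflect_real[where f = f and i = z and a = "- b" and b = "- a"] by auto
  qed
  with \<open>B > 0\<close> show "\<exists>B>0. \<forall>a b. ball 0 B \<subseteq> cbox a b \<longrightarrow>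
      (\<exists>z. ((\<lambda>x. f (- x)) has_integral z) (cbox a b) \<and> norm (z - I) < e)"
    by blast
qed

lemma has_integral_UNIV_halves:
  fixes f :: "real \<Rightarrow> 'a::banach"
  assumes "(f has_integral I) {0<..}" and "((\<lambda>x. f (- x)) has_integral J) {0<..}"
  shows "(f has_integral I + J) UNIV"
proof -
  have "((\<lambda>x. if x \<in> {0<..} then f (- x) else 0) has_integral J) UNIV"
    using assms(2) by (simp only: has_integral_restrict_UNIV)
  from has_integral_reflect_UNIV[OF this]
  have "((\<lambda>x. if x \<in> {..<0} then f x else 0) has_integral J) UNIV"
    by (simp add: if_distrib cong: if_cong)
  then have "(f has_integral J) {..<0}"
    by (simp only: has_integral_restrict_UNIV)
  moreover have "{0<..} \<inter> {..<0} = ({} :: real set)" by auto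
  ultimately have "(f has_integral I + J) ({0<..} \<union> {..<0})"
    using assms(1) by (intro has_integral_Un) simp_all
  moreover have "negligible {x \<in> UNIV - ({0<..} \<union> {..<0}). f x \<noteq> 0}"
    by (rule negligible_subset[of "{0}"]) auto
  ultimately show ?thesis
    by (subst (asm) has_integral_spike_set_eq[where T = UNIV]) auto
qed

lemma powr_of_real_mult_exp_ii:
  fixes \<eta> \<theta> w :: real
  assumes "\<eta> > 0" "- pi < \<theta>" "\<theta> \<le> pi"
  shows "(of_real \<eta> * exp (\<i> * of_real \<theta>)) powr of_real w
           = of_real (\<eta> powr w) * exp (\<i> * of_real (w * \<theta>))"
proof -
  have "(of_real \<eta> * exp (\<i> * of_real \<theta>)) powr of_real w
          = of_real \<eta> powr of_real w * exp (\<i> * of_real \<theta>) powr of_real w"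
    by (rule powr_times_real_left) (use assms in auto)
  also have "of_real \<eta> powr of_real w = (of_real (\<eta> powr w) :: complex)"
    by (rule powr_of_real) (use assms in simp)
  also have "exp (\<i> * of_real \<theta>) powr of_real w = exp (\<i> * of_real (w * \<theta>))"
    using assms by (subst exp_powr_complex) (simp_all add: mult_ac)
  finally show ?thesis .
qed

lemma minus_ii_power_exp_add_ii_power_exp:
  fixes \<phi> :: real
  shows "(- \<i>) ^ n * exp (\<i> * of_real \<phi>) + \<i> ^ n * exp (- (\<i> * of_real \<phi>))
           = of_real (2 * cos (\<phi> - real n * pi / 2))"
proof -
  have minus_ii: "- \<i> = exp (\<i> * of_real (- pi / 2))"
    by (simp add: exp_eq_polar flip: cis_conv_exp)
  have ii: "\<i> = exp (\<i> * of_real (pi / 2))"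
    by (metis cis_conv_exp cis_pi_half)
  have "(- \<i>) ^ n = exp (\<i> * of_real (- (real n * pi / 2)))"
    by (subst minus_ii) (simp add: algebra_simps flip: exp_of_nat_mult)
  moreover have "\<i> ^ n = exp (- (\<i> * of_real (- (real n * pi / 2))))"
    by (subst ii) (simp add: algebra_simps flip: exp_of_nat_mult)
  ultimately have "(- \<i>) ^ n * exp (\<i> * of_real \<phi>) + \<i> ^ n * exp (- (\<i> * of_real \<phi>))
      = exp (\<i> * of_real (\<phi> - real n * pi / 2)) + exp (- (\<i> * of_real (\<phi> - real n * pi / 2)))"
    by (simp add: algebra_simps flip: exp_add)
  also have "\<dots> = of_real (2 * cos (\<phi> - real n * pi / 2))"
    by (simp add: cos_exp_eq flip: cos_of_real)
  finally show ?thesis .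
qed

lemma rGamma_one_minus_real:
  fixes s :: real
  assumes "s \<notin> \<int>\<^sub>\<le>\<^sub>0"
  shows "rGamma (1 - s) = Gamma s * sin (pi * s) / pi"
proof -
  have "complex_of_real (rGamma s * rGamma (1 - s)) = of_real (sin (pi * s) / pi)"
    using rGamma_reflection_complex[of "of_real s"]
    by (simp flip: rGamma_complex_of_real sin_of_real)
  then have "rGamma s * rGamma (1 - s) = sin (pi * s) / pi"
    by (simp only: of_real_eq_iff)
  moreover have "Gamma s * rGamma s = 1"
    using assms by (simp add: Gamma_def rGamma_eq_zero_iff)
  ultimately show ?thesis
    by (metis mult.assoc mult_1 times_divide_eq_right)
qed

lemma stable_density_series_term:
  fixes \<alpha> \<eta> x :: real and n :: nat
  assumes "1 < \<alpha>" "\<alpha> \<le> 2" "\<eta> > 0"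
  defines "\<theta> \<equiv> pi * (2 - \<alpha>) / 2" and "s \<equiv> (real n + 1) / \<alpha>"
  shows "((- \<i> * of_real x) ^ n /\<^sub>R fact n) *
            (of_real (Gamma s / \<alpha>) * (of_real \<eta> * exp (\<i> * of_real (- \<theta>))) powr (- of_real s))
       + ((- \<i> * of_real (- x)) ^ n /\<^sub>R fact n) *
            (of_real (Gamma s / \<alpha>) * (of_real \<eta> * exp (\<i> * of_real \<theta>)) powr (- of_real s))
       = of_real (2 * pi * ((- x) ^ n / fact n * \<eta> powr (- s) * rGamma (1 - s) / \<alpha>))"
proof -
  have "0 \<le> \<theta>" "\<theta> < pi" using assms(1,2) by (simp_all add: \<theta>_def)
  then have powr_minus_s:
      "(of_real \<eta> * exp (\<i> * of_real (- \<theta>))) powr (- of_real s) = of_real (\<eta> powr (- s)) * exp (\<i> * of_real (s * \<theta>))"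
      "(of_real \<eta> * exp (\<i> * of_real \<theta>)) powr (- of_real s) = of_real (\<eta> powr (- s)) * exp (- (\<i> * of_real (s * \<theta>)))"
    using powr_of_real_mult_exp_ii[OF assms(3), of "- \<theta>" "- s"]
          powr_of_real_mult_exp_ii[OF assms(3), of \<theta> "- s"] by simp_all
  define A where "A = x ^ n / fact n * (Gamma s / \<alpha>) * \<eta> powr (- s)"
  have "(- \<i> * of_real x) ^ n = (- \<i>) ^ n * of_real (x ^ n)"
    by (simp only: power_mult_distrib of_real_power)
  moreover have "(- \<i> * of_real (- x)) ^ n = \<i> ^ n * of_real (x ^ n)"
    using power_mult_distrib[of \<i> "of_real x" n] by simp
  ultimately have expand: "?thesis \<longleftrightarrow>
      of_real A * ((- \<i>) ^ n * exp (\<i> * of_real (s * \<theta>)) + \<i> ^ n * exp (- (\<i> * of_real (s * \<theta>))))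
        = of_real (2 * pi * ((- x) ^ n / fact n * \<eta> powr (- s) * rGamma (1 - s) / \<alpha>))"
    unfolding powr_minus_s A_def by (simp add: scaleR_conv_of_real algebra_simps divide_inverse)
  have "s * \<theta> - real n * pi / 2 = pi * s - pi / 2 - real n * pi"
    using assms(1) by (simp add: \<theta>_def s_def field_simps)
  then have angle: "cos (s * \<theta> - real n * pi / 2) = (- 1) ^ n * sin (pi * s)"
    by (simp add: cos_diff)
  have "s > 0" using assms(1) by (simp add: s_def)
  then have "s \<notin> \<int>\<^sub>\<le>\<^sub>0" by (auto elim!: nonpos_Ints_cases)
  then have reflection: "Gamma s * sin (pi * s) = pi * rGamma (1 - s)"
    by (simp add: rGamma_one_minus_real)
  have "of_real A * ((- \<i>) ^ n * exp (\<i> * of_real (s * \<theta>)) + \<i> ^ n * exp (- (\<i> * of_real (s * \<theta>))))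
          = of_real (2 * pi * ((- x) ^ n / fact n * \<eta> powr (- s) * rGamma (1 - s) / \<alpha>))"
    unfolding minus_ii_power_exp_add_ii_power_exp angle A_def power_minus[of x]
    using arg_cong[OF reflection, of complex_of_real] by (simp add: field_simps)
  with expand show ?thesis by blast
qed

lemma stable_density_sums:
  fixes \<alpha> \<eta> x :: real
  assumes "1 < \<alpha>" "\<alpha> \<le> 2" "\<eta> > 0"
  shows "(\<lambda>n. of_real ((- x) ^ n / fact n * \<eta> powr (- ((real n + 1) / \<alpha>))
                         * rGamma (1 - (real n + 1) / \<alpha>) / \<alpha>))
           sums stable_density \<alpha> x (2 - \<alpha>) \<eta>"
proof -
  define \<theta> where "\<theta> = pi * (2 - \<alpha>) / 2"
  have "0 \<le> \<theta>" "\<theta> < pi / 2" using assms(1,2) by (simp_all add: \<theta>_def)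
  then have "cos \<theta> > 0" by (intro cos_gt_zero_pi) auto
  define c\<^sub>1 where "c\<^sub>1 = of_real \<eta> * exp (\<i> * of_real (- \<theta>))"
  define c\<^sub>2 where "c\<^sub>2 = of_real \<eta> * exp (\<i> * of_real \<theta>)"
  have "Re c\<^sub>1 > 0" "Re c\<^sub>2 > 0"
    using assms(3) \<open>cos \<theta> > 0\<close> by (simp_all add: c\<^sub>1_def c\<^sub>2_def Re_exp)
  obtain I\<^sub>1 where sums_pos:
      "(\<lambda>n. ((- \<i> * of_real x) ^ n /\<^sub>R fact n) * (of_real (Gamma ((real n + 1) / \<alpha>) / \<alpha>)
               * c\<^sub>1 powr (- of_real ((real n + 1) / \<alpha>)))) sums I\<^sub>1"
    and int_pos: "((\<lambda>\<beta>. exp (- \<i> * of_real (\<beta> * x)) * exp (- (c\<^sub>1 * of_real (\<beta> powr \<alpha>))))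
                     has_integral I\<^sub>1) {0<..}"
    using has_integral_Fourier_exp_neg_powr[OF assms(1) \<open>Re c\<^sub>1 > 0\<close>] by blast
  obtain I\<^sub>2 where sums_neg:
      "(\<lambda>n. ((- \<i> * of_real (- x)) ^ n /\<^sub>R fact n) * (of_real (Gamma ((real n + 1) / \<alpha>) / \<alpha>)
               * c\<^sub>2 powr (- of_real ((real n + 1) / \<alpha>)))) sums I\<^sub>2"
    and int_neg: "((\<lambda>\<beta>. exp (- \<i> * of_real (\<beta> * - x)) * exp (- (c\<^sub>2 * of_real (\<beta> powr \<alpha>))))
                     has_integral I\<^sub>2) {0<..}"
    using has_integral_Fourier_exp_neg_powr[OF assms(1) \<open>Re c\<^sub>2 > 0\<close>] by blast
  define F where "F = (\<lambda>\<beta>::real. exp (- \<i> * of_real (\<beta> * x)) *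
      exp (- of_real (\<eta> * \<bar>\<beta>\<bar> powr \<alpha>) * exp (- \<i> * of_real (pi * (2 - \<alpha>) / 2 * sgn \<beta>))))"
  have "(F has_integral I\<^sub>1) {0<..}"
    by (rule has_integral_eq[OF _ int_pos])
       (simp add: F_def c\<^sub>1_def \<theta>_def algebra_simps diff_divide_distrib)
  moreover have "((\<lambda>\<beta>. F (- \<beta>)) has_integral I\<^sub>2) {0<..}"
    by (rule has_integral_eq[OF _ int_neg]) (simp add: F_def c\<^sub>2_def \<theta>_def algebra_simps)
  ultimately have "stable_density \<alpha> x (2 - \<alpha>) \<eta> = 1 / (2 * of_real pi) * (I\<^sub>1 + I\<^sub>2)"
    unfolding stable_density_def F_def[symmetric] by (simp add: has_integral_UNIV_halves integral_unique)
  moreover have "(\<lambda>n. 1 / (2 * of_real pi) * (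
      ((- \<i> * of_real x) ^ n /\<^sub>R fact n) * (of_real (Gamma ((real n + 1) / \<alpha>) / \<alpha>)
               * c\<^sub>1 powr (- of_real ((real n + 1) / \<alpha>)))
      + ((- \<i> * of_real (- x)) ^ n /\<^sub>R fact n) * (of_real (Gamma ((real n + 1) / \<alpha>) / \<alpha>)
               * c\<^sub>2 powr (- of_real ((real n + 1) / \<alpha>)))))
        sums (1 / (2 * of_real pi) * (I\<^sub>1 + I\<^sub>2))"
    by (intro sums_mult sums_add sums_pos sums_neg)
  ultimately show ?thesis
    unfolding c\<^sub>1_def c\<^sub>2_def \<theta>_def stable_density_series_term[OF assms] by simp
qed

definition mainardi :: "real \<Rightarrow> real \<Rightarrow> real" where
  "mainardi \<nu> z = (\<Sum>k. (- z) ^ k / fact k * rGamma (1 - \<nu> * (real k + 1)))"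

lemma u_sol_eq_mainardi:
  "u_sol lam \<nu> x t = mainardi (\<nu> / 2) (\<bar>x\<bar> / (lam * t powr (\<nu> / 2))) / (2 * lam * t powr (\<nu> / 2))"
proof -
  have exponent: "- \<nu> * real k / 2 + 1 - \<nu> / 2 = 1 - \<nu> / 2 * (real k + 1)" for k :: nat
    by (simp add: algebra_simps)
  show ?thesis unfolding u_sol_def mainardi_def exponent by simp
qed

lemma stable_density_eq_mainardi:
  fixes \<alpha> \<eta> x :: real
  assumes "1 < \<alpha>" "\<alpha> \<le> 2" "\<eta> > 0"
  shows "stable_density \<alpha> x (2 - \<alpha>) \<eta>
           = of_real (\<eta> powr (- 1 / \<alpha>) / \<alpha> * mainardi (1 / \<alpha>) (x * \<eta> powr (- 1 / \<alpha>)))"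
proof -
  define C where "C = \<eta> powr (- 1 / \<alpha>) / \<alpha>"
  define m where "m = (\<lambda>k. (- (x * \<eta> powr (- 1 / \<alpha>))) ^ k / fact k * rGamma (1 - 1 / \<alpha> * (real k + 1)))"
  have "C \<noteq> 0" using assms by (simp add: C_def)
  have "\<eta> powr (- ((real k + 1) / \<alpha>)) = \<eta> powr (- 1 / \<alpha>) * (\<eta> powr (- 1 / \<alpha>)) ^ k" for k :: nat
  proof -
    have "\<eta> powr (- ((real k + 1) / \<alpha>)) = \<eta> powr (- 1 / \<alpha> + - real k / \<alpha>)"
      by (rule arg_cong[where f = "(powr) \<eta>"]) (simp add: add_divide_distrib)
    also have "\<dots> = \<eta> powr (- 1 / \<alpha>) * \<eta> powr (- real k / \<alpha>)"
      by (rule powr_add)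
    also have "\<eta> powr (- real k / \<alpha>) = (\<eta> powr (- 1 / \<alpha>)) ^ k"
      using assms by (simp add: powr_powr flip: powr_realpow)
    finally show ?thesis .
  qed
  then have "(- x) ^ k / fact k * \<eta> powr (- ((real k + 1) / \<alpha>)) * rGamma (1 - (real k + 1) / \<alpha>) / \<alpha>
               = C * m k" for k
    by (simp add: C_def m_def power_minus[of x] power_minus[of "x * _"] power_mult_distrib mult_ac)
  then have series: "(\<lambda>k. complex_of_real (C * m k)) sums stable_density \<alpha> x (2 - \<alpha>) \<eta>"
    using stable_density_sums[OF assms, of x] by simp
  then have "summable m"
    using \<open>C \<noteq> 0\<close> summable_cmult_iff[of C m] by (auto simp: summable_of_real_iff dest: sums_summable)
  then have "(\<lambda>k. complex_of_real (C * m k)) sums of_real (C * suminf m)"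
    by (intro sums_of_real sums_mult summable_sums)
  with series have "stable_density \<alpha> x (2 - \<alpha>) \<eta> = of_real (C * suminf m)"
    by (rule sums_unique2)
  then show ?thesis by (simp only: C_def m_def mainardi_def)
qed

theorem theorem5p5:
  fixes lam \<nu> x t :: real
  assumes "lam > 0" and "1 \<le> \<nu>" and "\<nu> < 2" and "t > 0"
  shows "complex_of_real (u_sol lam \<nu> x t) =
           of_real (2 / \<nu>) * of_real (1 / (2 * lam * t powr (\<nu>/2))) *
           stable_density (2/\<nu>) (\<bar>x\<bar> / (lam * t powr (\<nu>/2))) (2/\<nu> * (\<nu> - 1)) 1
       \<and> complex_of_real (u_sol lam \<nu> x t) =
           of_real (1 / \<nu>) *
           stable_density (2/\<nu>) \<bar>x\<bar> (2/\<nu> * (\<nu> - 1)) (lam powr (2/\<nu>) * t)"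
proof -
  define L where "L = lam * t powr (\<nu> / 2)"
  have "L > 0" using assms by (simp add: L_def)
  have \<alpha>: "1 < 2 / \<nu>" "2 / \<nu> \<le> 2" using assms by (simp_all add: field_simps)
  have skew: "2 / \<nu> * (\<nu> - 1) = 2 - 2 / \<nu>" and reciprocal: "1 / (2 / \<nu>) = \<nu> / 2"
    using assms by (simp_all add: field_simps)
  have scale: "(lam powr (2 / \<nu>) * t) powr (- 1 / (2 / \<nu>)) = 1 / L"
    using assms by (simp add: L_def powr_mult powr_powr powr_minus field_simps)
  have unit_scale: "stable_density (2 / \<nu>) (\<bar>x\<bar> / L) (2 / \<nu> * (\<nu> - 1)) 1
          = of_real (\<nu> / 2 * mainardi (\<nu> / 2) (\<bar>x\<bar> / L))"
    using stable_density_eq_mainardi[OF \<alpha>, of 1 "\<bar>x\<bar> / L"] unfolding skew reciprocal by simp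
  have time_scale: "stable_density (2 / \<nu>) \<bar>x\<bar> (2 / \<nu> * (\<nu> - 1)) (lam powr (2 / \<nu>) * t)
          = of_real (\<nu> / 2 / L * mainardi (\<nu> / 2) (\<bar>x\<bar> / L))"
    using stable_density_eq_mainardi[OF \<alpha>, of "lam powr (2 / \<nu>) * t" "\<bar>x\<bar>"] assms
    unfolding skew scale reciprocal by simp
  have denominator: "2 * lam * t powr (\<nu> / 2) = 2 * L" by (simp add: L_def)
  show ?thesis
    using assms \<open>L > 0\<close>
    unfolding u_sol_eq_mainardi denominator L_def[symmetric] unit_scale time_scale
    by (simp add: field_simps)
qed

end
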